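(* Let $p\in(0,1)$, let $d_p$ be the $(1-p)$-quantile of $K_{\hat\vartheta}=\sup_{x\in\mathbb{R}}|F_{\hat\vartheta}(x)-F_\vartheta(x)|$, let $B_4=\{(x,y)\in\mathbb{R}^2:|F_{\hat\vartheta}(x)-y|\le d_p\}$, and define $$C_4'=\{\tilde\vartheta\in\Theta:\ \mathrm{graph}\,F_{\tilde\vartheta}\subseteq B_4\},\quad C_4''=\{(\mu,\sigma)\in C_4':\mu\le\hat\mu\},\quad B_4'=\bigcup_{\tilde\vartheta\in C_4'}\mathrm{graph}\,F_{\tilde\vartheta},\quad B_4''=\bigcup_{\tilde\vartheta\in C_4''}\mathrm{graph}\,F_{\tilde\vartheta}.$$ Then for every $\vartheta\in\Theta$, $$P_\vartheta(\vartheta\in C_4')=P_\vartheta(\vartheta\in C_4'')=P_\vartheta(\mathrm{graph}\,F_\vartheta\subseteq B_4')=P_\vartheta(\mathrm{graph}\,F_\vartheta\subseteq B_4'')=1-p.$$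
   Context: Let $1<m\le n$ be integers and $(R_1,\dots,R_m)\in\mathbb{N}_0^m$ with $\sum_{j=1}^mR_j=n-m$; set $\gamma_j=\sum_{i=j}^m(R_i+1)$. A sample of progressively type-II censored order statistics $X=(X_{1:m:n},\dots,X_{m:m:n})$ from an absolutely continuous cdf $F$ with density $f$ has joint density $\prod_{j=1}^m\gamma_jf(x_j)[1-F(x_j)]^{R_j}$ on $x_1\le\dots\le x_m$. Here $F=F_\vartheta$ belongs to the exponential location-scale family: for $\vartheta=(\mu,\sigma)\in\Theta=\mathbb{R}\times(0,\infty)$, $F_\vartheta(x)=1-\exp\{-(x-\mu)/\sigma\}$ for $x>\mu$ and $F_\vartheta(x)=0$ for $x\le\mu$; $\vartheta$ is unknown and $P_\vartheta$ denotes the underlying probability. The MLEs are $\hat\mu=X_{1:m:n}$ and $\hat\sigma=\frac1m\sum_{j=2}^m\gamma_j(X_{j:m:n}-X_{j-1:m:n})$, and $\hat\vartheta=(\hat\mu,\hat\sigma)$. The distribution of $K_{\hat\vartheta}$ is continuous and does not depend on $\vartheta$. $\mathrm{graph}\,F=\{(t,F(t)):t\in\mathbb{R}\}$. *)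

theory Defs
  imports "HOL-Probability.Probability"
begin

definition expF :: "real \<times> real \<Rightarrow> real \<Rightarrow> real" where
  "expF \<theta> t = (if t > fst \<theta> then 1 - exp (- (t - fst \<theta>) / snd \<theta>) else 0)"

definition expf :: "real \<times> real \<Rightarrow> real \<Rightarrow> real" where
  "expf \<theta> t = (if t > fst \<theta> then exp (- (t - fst \<theta>) / snd \<theta>) / snd \<theta> else 0)"

definition Theta :: "(real \<times> real) set" where
  "Theta = {\<theta>. snd \<theta> > 0}"

definition graphF :: "(real \<Rightarrow> real) \<Rightarrow> (real \<times> real) set" where
  "graphF F = {(t, F t) | t. True}"

definition gam :: "nat \<Rightarrow> (nat \<Rightarrow> nat) \<Rightarrow> nat \<Rightarrow> real" where
  "gam m R j = (\<Sum>i=j..m. real (R i) + 1)"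

text \<open>Samples are vectors x indexed by 1..m, x j = X_{j:m:n}.
  Joint density of progressively type-II censored order statistics.\<close>
definition pc_density :: "nat \<Rightarrow> (nat \<Rightarrow> nat) \<Rightarrow> real \<times> real \<Rightarrow> (nat \<Rightarrow> real) \<Rightarrow> real" where
  "pc_density m R \<theta> x =
     (if (\<forall>j\<in>{1..<m}. x j \<le> x (Suc j))
      then (\<Prod>j=1..m. gam m R j * expf \<theta> (x j) * (1 - expF \<theta> (x j)) ^ R j)
      else 0)"

definition P_pc :: "nat \<Rightarrow> (nat \<Rightarrow> nat) \<Rightarrow> real \<times> real \<Rightarrow> (nat \<Rightarrow> real) measure" where
  "P_pc m R \<theta> = density (PiM {1..m} (\<lambda>_. lborel)) (\<lambda>x. ennreal (pc_density m R \<theta> x))"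

definition mu_hat :: "(nat \<Rightarrow> real) \<Rightarrow> real" where
  "mu_hat x = x 1"

definition sigma_hat :: "nat \<Rightarrow> (nat \<Rightarrow> nat) \<Rightarrow> (nat \<Rightarrow> real) \<Rightarrow> real" where
  "sigma_hat m R x = (1 / real m) * (\<Sum>j=2..m. gam m R j * (x j - x (j - 1)))"

definition theta_hat :: "nat \<Rightarrow> (nat \<Rightarrow> nat) \<Rightarrow> (nat \<Rightarrow> real) \<Rightarrow> real \<times> real" where
  "theta_hat m R x = (mu_hat x, sigma_hat m R x)"

definition Kstat :: "nat \<Rightarrow> (nat \<Rightarrow> nat) \<Rightarrow> real \<times> real \<Rightarrow> (nat \<Rightarrow> real) \<Rightarrow> real" where
  "Kstat m R \<theta> x = (SUP t. \<bar>expF (theta_hat m R x) t - expF \<theta> t\<bar>)"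

definition d_quant :: "nat \<Rightarrow> (nat \<Rightarrow> nat) \<Rightarrow> real \<times> real \<Rightarrow> real \<Rightarrow> real" where
  "d_quant m R \<theta> p = Inf {t. measure (P_pc m R \<theta>) {x \<in> space (P_pc m R \<theta>). Kstat m R \<theta> x \<le> t} \<ge> 1 - p}"

definition B4 :: "nat \<Rightarrow> (nat \<Rightarrow> nat) \<Rightarrow> real \<Rightarrow> (nat \<Rightarrow> real) \<Rightarrow> (real \<times> real) set" where
  "B4 m R d x = {(s, y). \<bar>expF (theta_hat m R x) s - y\<bar> \<le> d}"

definition C4' :: "nat \<Rightarrow> (nat \<Rightarrow> nat) \<Rightarrow> real \<Rightarrow> (nat \<Rightarrow> real) \<Rightarrow> (real \<times> real) set" where
  "C4' m R d x = {\<theta>\<in>Theta. graphF (expF \<theta>) \<subseteq> B4 m R d x}"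

definition C4'' :: "nat \<Rightarrow> (nat \<Rightarrow> nat) \<Rightarrow> real \<Rightarrow> (nat \<Rightarrow> real) \<Rightarrow> (real \<times> real) set" where
  "C4'' m R d x = {\<theta>\<in>C4' m R d x. fst \<theta> \<le> mu_hat x}"

definition B4' :: "nat \<Rightarrow> (nat \<Rightarrow> nat) \<Rightarrow> real \<Rightarrow> (nat \<Rightarrow> real) \<Rightarrow> (real \<times> real) set" where
  "B4' m R d x = (\<Union>\<theta>\<in>C4' m R d x. graphF (expF \<theta>))"

definition B4'' :: "nat \<Rightarrow> (nat \<Rightarrow> nat) \<Rightarrow> real \<Rightarrow> (nat \<Rightarrow> real) \<Rightarrow> (real \<times> real) set" where
  "B4'' m R d x = (\<Union>\<theta>\<in>C4'' m R d x. graphF (expF \<theta>))"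

end

(* The four events agree up to P-null sets with the event K <= d: on almost every sample the band
   condition for theta is exactly K <= d, the sample minimum mu_hat exceeds mu, a graph contained in
   the union of admissible graphs is itself admissible, and for B4'' the location constraint is forced
   because expF theta vanishes at mu.  As d is the (1 - p)-quantile of K, it remains to show that K
   has no atoms.  K depends on the sample only through mu_hat and sigma_hat, and a shift of the sample
   along the diagonal moves mu_hat alone.  As functions of the location, the supremum of the negative
   part of the gap between the two cdfs increases strictly and that of the positive part decreases
   strictly while positive, so each level set of K meets every diagonal line in finitely many points
   and is Lebesgue-null by Fubini.  That P is a probability measure follows by integrating out the
   order statistics from the last one. *)

theory Submission
  imports Defs "HOL-Real_Asymp.Real_Asymp"
begin

section \<open>Gaps between exponential distribution functions\<close>

lemma expF_eq_max: "expF \<theta> s = 1 - exp (- (max s (fst \<theta>) - fst \<theta>) / snd \<theta>)"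
  by (simp add: expF_def max_def)

lemma continuous_on_expF: "continuous_on UNIV (expF \<theta>)"
  unfolding expF_eq_max[abs_def] divide_inverse by (intro continuous_intros)

lemma expF_bounds: "snd \<theta> > 0 \<Longrightarrow> 0 \<le> expF \<theta> s \<and> expF \<theta> s \<le> 1"
  by (auto simp: expF_def divide_nonpos_pos)

definition expF_gap :: "real \<Rightarrow> real \<Rightarrow> real \<Rightarrow> real \<Rightarrow> real \<Rightarrow> real" where
  "expF_gap \<mu> \<sigma> \<sigma>' u s = expF (u, \<sigma>') s - expF (\<mu>, \<sigma>) s"

lemma abs_expF_gap_le_1: "\<sigma> > 0 \<Longrightarrow> \<sigma>' > 0 \<Longrightarrow> \<bar>expF_gap \<mu> \<sigma> \<sigma>' u s\<bar> \<le> 1"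
  using expF_bounds[of "(u, \<sigma>')" s] expF_bounds[of "(\<mu>, \<sigma>)" s] by (auto simp: expF_gap_def)

lemma bdd_above_expF_gap:
  assumes "\<sigma> > 0" "\<sigma>' > 0"
  shows "bdd_above (range (expF_gap \<mu> \<sigma> \<sigma>' u))"
    and "bdd_above (range (\<lambda>s. - expF_gap \<mu> \<sigma> \<sigma>' u s))"
  using abs_expF_gap_le_1[OF assms] by (intro bdd_aboveI[of _ 1]; auto simp: abs_le_iff)+

lemma SUP_abs_eq_max:
  fixes f :: "'a \<Rightarrow> real"
  assumes "bdd_above (range f)" "bdd_above (range (\<lambda>s. - f s))"
  shows "(SUP s. \<bar>f s\<bar>) = max (SUP s. f s) (SUP s. - f s)"
proof (rule antisym)
  show "(SUP s. \<bar>f s\<bar>) \<le> max (SUP s. f s) (SUP s. - f s)"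
    using cSUP_upper[OF UNIV_I assms(1)] cSUP_upper[OF UNIV_I assms(2)]
    by (intro cSUP_least) (auto simp: abs_if le_max_iff_disj)
  obtain b c where "\<And>s. f s \<le> b" "\<And>s. - f s \<le> c"
    using assms by (auto simp: bdd_above_def)
  then have "bdd_above (range (\<lambda>s. \<bar>f s\<bar>))"
    by (intro bdd_aboveI[of _ "max b c"]) (auto simp: abs_if le_max_iff_disj)
  then show "max (SUP s. f s) (SUP s. - f s) \<le> (SUP s. \<bar>f s\<bar>)"
    by (auto intro!: cSUP_mono intro: abs_ge_self abs_ge_minus_self)
qed

lemma expF_shift: "expF (u + c, \<sigma>) (s + c) = expF (u, \<sigma>) s"
  by (simp add: expF_def)

lemma expF_increment:
  assumes "\<mu> < s" "0 \<le> \<delta>"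
  shows "expF (\<mu>, \<sigma>) (s + \<delta>) - expF (\<mu>, \<sigma>) s = exp (- (s - \<mu>) / \<sigma>) * (1 - exp (- \<delta> / \<sigma>))"
  using assms by (simp add: expF_def algebra_simps flip: exp_add) (simp add: diff_divide_distrib add_divide_distrib)

lemma expF_gap_shift:
  "expF_gap \<mu> \<sigma> \<sigma>' (u + \<delta>) (s + \<delta>) = expF_gap \<mu> \<sigma> \<sigma>' u s - (expF (\<mu>, \<sigma>) (s + \<delta>) - expF (\<mu>, \<sigma>) s)"
  by (simp add: expF_gap_def expF_shift)

lemma neg_expF_gap_large_imp:
  assumes "\<sigma>' > 0" "0 < c" "c \<le> 1" and large: "c / 2 < - expF_gap \<mu> \<sigma> \<sigma>' u s"
  shows "\<mu> < s" and "s < u + \<sigma>' * ln (2 / c)"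
proof -
  show "\<mu> < s"
  proof (rule ccontr)
    assume "\<not> \<mu> < s"
    then have "- expF_gap \<mu> \<sigma> \<sigma>' u s \<le> 0"
      using expF_bounds[of "(u, \<sigma>')" s] assms(1) by (simp add: expF_gap_def expF_def)
    with large assms(2) show False by linarith
  qed
  have L: "0 < ln (2 / c)" using assms(2,3) by simp
  show "s < u + \<sigma>' * ln (2 / c)"
  proof (cases "u < s")
    case True
    have "- expF_gap \<mu> \<sigma> \<sigma>' u s \<le> exp (- (s - u) / \<sigma>')"
      using True by (simp add: expF_gap_def expF_def)
    with large have "ln (c / 2) < ln (exp (- (s - u) / \<sigma>'))"
      using assms(2) by (subst ln_less_cancel_iff) auto
    then show ?thesis using assms(1,2) by (simp add: ln_div field_simps)
  next
    case False
    moreover have "0 < \<sigma>' * ln (2 / c)" using L assms(1) by simp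
    ultimately show ?thesis by linarith
  qed
qed

lemma expF_gap_large_imp:
  assumes "\<sigma> > 0" "\<mu> < v" and large: "g / 2 < expF_gap \<mu> \<sigma> \<sigma>' v s" "0 < g"
  shows "v < s" and "g / 2 < exp (- (s - \<mu>) / \<sigma>)"
proof -
  show "v < s"
  proof (rule ccontr)
    assume "\<not> v < s"
    then have "expF_gap \<mu> \<sigma> \<sigma>' v s \<le> 0"
      using expF_bounds[of "(\<mu>, \<sigma>)" s] assms(1) by (simp add: expF_gap_def expF_def)
    with large show False by linarith
  qed
  then have "expF_gap \<mu> \<sigma> \<sigma>' v s \<le> exp (- (s - \<mu>) / \<sigma>)"
    using assms(2) by (simp add: expF_gap_def expF_def)
  with large show "g / 2 < exp (- (s - \<mu>) / \<sigma>)" by linarith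
qed

text \<open>Shifting location and argument by \<open>\<delta> = v - u\<close> fixes \<open>expF (u, \<sigma>')\<close> and raises
  \<open>expF (\<mu>, \<sigma>)\<close>; at an almost-maximising argument the rise is bounded below uniformly.\<close>
lemma SUP_neg_expF_gap_strict_mono:
  assumes "\<sigma> > 0" "\<sigma>' > 0"
  shows "strict_mono_on {\<mu><..} (\<lambda>u. SUP s. - expF_gap \<mu> \<sigma> \<sigma>' u s)"
proof (rule strict_mono_onI)
  fix u v assume "u \<in> {\<mu><..}" "v \<in> {\<mu><..}" "u < v"
  then have uv: "\<mu> < u" "u < v" by auto
  let ?g = "\<lambda>u. SUP s. - expF_gap \<mu> \<sigma> \<sigma>' u s"
  note bdd = bdd_above_expF_gap(2)[OF assms]
  define c where "c = 1 - exp (- (u - \<mu>) / \<sigma>)"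
  define \<delta> where "\<delta> = v - u"
  define \<eta> where "\<eta> = exp (- (u + \<sigma>' * ln (2 / c) - \<mu>) / \<sigma>) * (1 - exp (- \<delta> / \<sigma>))"
  have c: "0 < c" "c \<le> 1" using uv assms by (auto simp: c_def divide_neg_pos)
  have \<delta>: "\<delta> > 0" using uv by (simp add: \<delta>_def)
  have \<eta>: "\<eta> > 0" using \<delta> assms by (simp add: \<eta>_def)
  have "- expF_gap \<mu> \<sigma> \<sigma>' u u = c" using uv by (simp add: expF_gap_def expF_def c_def)
  then have "c \<le> ?g u" using cSUP_upper[OF UNIV_I bdd[where \<mu>=\<mu> and u=u], where x=u] by simp
  moreover have "?g u - min (c / 2) \<eta> < ?g u" using \<eta> c by simp
  ultimately obtain s where s: "?g u - min (c / 2) \<eta> < - expF_gap \<mu> \<sigma> \<sigma>' u s" "c / 2 < - expF_gap \<mu> \<sigma> \<sigma>' u s"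
    using less_cSUP_iff[OF _ bdd] by force
  note near = neg_expF_gap_large_imp[OF assms(2) c s(2)]
  have "exp (- (u + \<sigma>' * ln (2 / c) - \<mu>) / \<sigma>) \<le> exp (- (s - \<mu>) / \<sigma>)"
    using near(2) assms(1) by (simp add: divide_right_mono)
  then have "\<eta> \<le> expF (\<mu>, \<sigma>) (s + \<delta>) - expF (\<mu>, \<sigma>) s"
    unfolding \<eta>_def expF_increment[OF near(1) less_imp_le[OF \<delta>]] using \<delta> assms(1)
    by (intro mult_right_mono) auto
  then have "?g u < - expF_gap \<mu> \<sigma> \<sigma>' v (s + \<delta>)"
    using s(1) expF_gap_shift[of \<mu> \<sigma> \<sigma>' u \<delta> s] by (simp add: \<delta>_def)
  also have "\<dots> \<le> ?g v" by (rule cSUP_upper[OF UNIV_I bdd])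
  finally show "?g u < ?g v" .
qed

lemma SUP_expF_gap_strict_antimono:
  assumes "\<sigma> > 0" "\<sigma>' > 0" "\<mu> < u" "u < v" and pos: "(SUP s. expF_gap \<mu> \<sigma> \<sigma>' v s) > 0"
  shows "(SUP s. expF_gap \<mu> \<sigma> \<sigma>' v s) < (SUP s. expF_gap \<mu> \<sigma> \<sigma>' u s)"
proof -
  note bdd = bdd_above_expF_gap(1)[OF assms(1,2)]
  define g where "g = (SUP s. expF_gap \<mu> \<sigma> \<sigma>' v s)"
  define \<delta> where "\<delta> = v - u"
  define \<eta> where "\<eta> = (g / 2) * (1 - exp (- \<delta> / \<sigma>))"
  have \<delta>: "\<delta> > 0" using assms by (simp add: \<delta>_def)
  have g: "g > 0" using pos by (simp add: g_def)
  have \<eta>: "\<eta> > 0" using \<delta> assms g by (simp add: \<eta>_def)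
  have "g - min (g / 2) \<eta> < g" using \<eta> g by simp
  then obtain s where s: "g - min (g / 2) \<eta> < expF_gap \<mu> \<sigma> \<sigma>' v s"
    using less_cSUP_iff[OF _ bdd] unfolding g_def by auto
  then have "g / 2 < expF_gap \<mu> \<sigma> \<sigma>' v s" by linarith
  note near = expF_gap_large_imp[OF assms(1) less_trans[OF assms(3,4)] this g]
  have "\<mu> < s - \<delta>" using near(1) assms(3,4) by (simp add: \<delta>_def)
  have "exp (- (s - \<mu>) / \<sigma>) \<le> exp (- (s - \<delta> - \<mu>) / \<sigma>)"
    using \<delta> assms(1) by (simp add: divide_right_mono)
  with near(2) have "g / 2 \<le> exp (- (s - \<delta> - \<mu>) / \<sigma>)" by linarith
  then have "\<eta> \<le> expF (\<mu>, \<sigma>) (s - \<delta> + \<delta>) - expF (\<mu>, \<sigma>) (s - \<delta>)"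
    unfolding \<eta>_def expF_increment[OF \<open>\<mu> < s - \<delta>\<close> less_imp_le[OF \<delta>]]
    using \<delta> assms(1) by (intro mult_right_mono) auto
  then have "g < expF_gap \<mu> \<sigma> \<sigma>' u (s - \<delta>)"
    using s expF_gap_shift[of \<mu> \<sigma> \<sigma>' u \<delta> "s - \<delta>"] by (simp add: \<delta>_def)
  also have "\<dots> \<le> (SUP s. expF_gap \<mu> \<sigma> \<sigma>' u s)" by (rule cSUP_upper[OF UNIV_I bdd])
  finally show ?thesis by (simp add: g_def)
qed

lemma finite_level_set_SUP_abs_expF_gap:
  assumes "\<sigma> > 0" "\<sigma>' > 0"
  shows "finite {u. \<mu> < u \<and> (SUP s. \<bar>expF_gap \<mu> \<sigma> \<sigma>' u s\<bar>) = t}"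
proof -
  let ?gp = "\<lambda>u. SUP s. expF_gap \<mu> \<sigma> \<sigma>' u s" and ?gm = "\<lambda>u. SUP s. - expF_gap \<mu> \<sigma> \<sigma>' u s"
  let ?A = "{u. 0 < ?gp u \<and> \<mu> < u}"
  have gm_pos: "?gm u > 0" if "\<mu> < u" for u
  proof -
    have "- expF_gap \<mu> \<sigma> \<sigma>' u u = 1 - exp (- (u - \<mu>) / \<sigma>)" using that by (simp add: expF_gap_def expF_def)
    moreover have "1 - exp (- (u - \<mu>) / \<sigma>) > 0" using that assms by (simp add: divide_neg_pos)
    ultimately show ?thesis using cSUP_upper[OF UNIV_I bdd_above_expF_gap(2)[OF assms, where \<mu>=\<mu> and u=u], where x=u] by linarith
  qed
  have "inj_on ?gm {\<mu><..}"
    by (rule strict_mono_on_imp_inj_on[OF SUP_neg_expF_gap_strict_mono[OF assms]])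
  then have "finite (?gm -` {t} \<inter> {\<mu><..})" by (intro finite_vimage_IntI) auto
  moreover have "inj_on ?gp ?A"
  proof (rule inj_onI)
    fix x y assume "x \<in> ?A" "y \<in> ?A" "?gp x = ?gp y"
    then show "x = y"
      using SUP_expF_gap_strict_antimono[OF assms, of \<mu>] by (cases x y rule: linorder_cases) force+
  qed
  then have "finite (?gp -` {t} \<inter> ?A)" by (intro finite_vimage_IntI) auto
  moreover have "{u. \<mu> < u \<and> (SUP s. \<bar>expF_gap \<mu> \<sigma> \<sigma>' u s\<bar>) = t}
      \<subseteq> (?gm -` {t} \<inter> {\<mu><..}) \<union> (?gp -` {t} \<inter> ?A)"
    using gm_pos SUP_abs_eq_max[OF bdd_above_expF_gap(1,2)[OF assms]]
    by (force simp: max_def split: if_splits)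
  ultimately show ?thesis by (meson finite_Un finite_subset)
qed

section \<open>Lebesgue measure on finite products of the real line\<close>

abbreviation lborel_Pi :: "'i set \<Rightarrow> ('i \<Rightarrow> real) measure" where
  "lborel_Pi I \<equiv> PiM I (\<lambda>_. lborel)"

lemma product_sigma_finite_lborel: "product_sigma_finite (\<lambda>_::'i. lborel :: real measure)"
  by (simp add: product_sigma_finite_def lborel.sigma_finite_measure_axioms)

lemma distr_lborel_Pi_diagonal_shift:
  fixes I :: "'i set" and c :: real assumes I: "finite I"
  shows "distr (lborel_Pi I) (lborel_Pi I) (\<lambda>x. \<lambda>i\<in>I. c + x i) = lborel_Pi I"
proof (rule product_sigma_finite.PiM_eqI[OF product_sigma_finite_lborel I])
  fix A :: "'i \<Rightarrow> real set" assume A: "\<And>i. i \<in> I \<Longrightarrow> A i \<in> sets lborel"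
  have shift: "(\<lambda>x. \<lambda>i\<in>I. c + x i) \<in> measurable (lborel_Pi I) (lborel_Pi I)" by measurable
  have "(\<lambda>x. \<lambda>i\<in>I. c + x i) -` Pi\<^sub>E I A \<inter> space (lborel_Pi I) = Pi\<^sub>E I (\<lambda>i. (+) c -` A i)"
    by (auto simp: space_PiM PiE_def Pi_def extensional_def)
  moreover have "(+) c -` A i \<in> sets lborel" if "i \<in> I" for i
    using measurable_sets[of "(+) c" borel borel "A i"] A[OF that] by simp
  moreover have "emeasure lborel ((+) c -` A i) = emeasure lborel (A i)" if "i \<in> I" for i
    using A[OF that] by (subst (2) lborel_distr_plus[symmetric, of c]) (simp add: emeasure_distr)
  ultimately show "emeasure (distr (lborel_Pi I) (lborel_Pi I) (\<lambda>x. \<lambda>i\<in>I. c + x i)) (Pi\<^sub>E I A)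
      = (\<Prod>i\<in>I. emeasure lborel (A i))"
    using A I by (simp add: emeasure_distr[OF shift] sets_PiM_I_finite
        product_sigma_finite.emeasure_PiM[OF product_sigma_finite_lborel])
qed simp

text \<open>Fubini along the diagonal direction: integrate the translation invariance
  \<open>emeasure A = \<integral> indicator A (x + c\<one>) dx\<close> over \<open>c \<in> [0, 1]\<close> and swap the integrals.\<close>
lemma null_sets_lborel_Pi_by_diagonal_lines:
  assumes I: "finite I" and A: "A \<in> sets (lborel_Pi I)"
    and lines: "\<And>x. x \<in> space (lborel_Pi I) \<Longrightarrow> {c. (\<lambda>i\<in>I. c + x i) \<in> A} \<in> null_sets lborel"
  shows "A \<in> null_sets (lborel_Pi I)"
proof -
  interpret P: pair_sigma_finite lborel "lborel_Pi I"
    by (intro pair_sigma_finite.intro lborel.sigma_finite_measure_axioms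
        product_sigma_finite.sigma_finite[OF product_sigma_finite_lborel I])
  let ?T = "\<lambda>c x. \<lambda>i\<in>I. c + x i"
  have T: "?T c \<in> measurable (lborel_Pi I) (lborel_Pi I)" for c by measurable
  have f: "(\<lambda>(c, x). indicator {0..1} c * indicator A (?T c x) :: ennreal)
      \<in> borel_measurable (lborel \<Otimes>\<^sub>M lborel_Pi I)"
    using A by measurable
  have shift: "emeasure (lborel_Pi I) A = (\<integral>\<^sup>+x. indicator A (?T c x) \<partial>lborel_Pi I)" for c
  proof -
    have "emeasure (lborel_Pi I) A
        = (\<integral>\<^sup>+x. indicator A x \<partial>distr (lborel_Pi I) (lborel_Pi I) (?T c))"
      using A by (simp add: distr_lborel_Pi_diagonal_shift[OF I])
    also have "\<dots> = (\<integral>\<^sup>+x. indicator A (?T c x) \<partial>lborel_Pi I)"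
      using A by (subst nn_integral_distr[OF T]) auto
    finally show ?thesis .
  qed
  have "emeasure (lborel_Pi I) A = (\<integral>\<^sup>+c. emeasure (lborel_Pi I) A * indicator {0..1::real} c \<partial>lborel)"
    by (subst nn_integral_cmult_indicator) auto
  also have "\<dots> = (\<integral>\<^sup>+c. (\<integral>\<^sup>+x. indicator {0..1} c * indicator A (?T c x) \<partial>lborel_Pi I) \<partial>lborel)"
  proof (rule nn_integral_cong)
    fix c :: real
    show "emeasure (lborel_Pi I) A * indicator {0..1} c
        = (\<integral>\<^sup>+x. indicator {0..1} c * indicator A (?T c x) \<partial>lborel_Pi I)"
      using A by (subst nn_integral_cmult) (auto simp: shift[of c] mult.commute)
  qed
  also have "\<dots> = (\<integral>\<^sup>+x. (\<integral>\<^sup>+c. indicator {0..1} c * indicator A (?T c x) \<partial>lborel) \<partial>lborel_Pi I)"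
    using P.Fubini'[OF f] by (simp only: split_beta')
  also have "\<dots> = (\<integral>\<^sup>+x. 0 \<partial>lborel_Pi I)"
  proof (intro nn_integral_cong nn_integral_0_iff_AE[THEN iffD2])
    fix x assume "x \<in> space (lborel_Pi I)"
    from AE_not_in[OF lines[OF this]]
    show "AE c in lborel. indicator {0..1} c * indicator A (?T c x) = (0::ennreal)"
      by eventually_elim (auto simp: indicator_def)
  qed (use A in measurable)
  finally show ?thesis using A by auto
qed

lemma null_sets_lborel_Pi_coordinates_eq:
  assumes I: "finite I" and ij: "i \<in> I" "j \<in> I" "i \<noteq> j"
  shows "{x \<in> space (lborel_Pi I). x i = x j} \<in> null_sets (lborel_Pi I)"
proof -
  interpret product_sigma_finite "\<lambda>_. lborel :: real measure" by (rule product_sigma_finite_lborel)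
  let ?H = "{x \<in> space (lborel_Pi I). x i = x j}"
  have H: "?H \<in> sets (lborel_Pi I)" using ij by measurable
  have I_eq: "I = insert i (I - {i})" using ij by auto
  have "emeasure (lborel_Pi I) ?H = (\<integral>\<^sup>+x. indicator ?H x \<partial>lborel_Pi (insert i (I - {i})))"
    using H I_eq by simp
  also have "\<dots> = (\<integral>\<^sup>+x. (\<integral>\<^sup>+y. indicator ?H (x(i := y)) \<partial>lborel) \<partial>lborel_Pi (I - {i}))"
    using H I_eq I by (subst product_nn_integral_insert) auto
  also have "\<dots> = (\<integral>\<^sup>+x. (\<integral>\<^sup>+y. indicator {x j} y \<partial>lborel) \<partial>lborel_Pi (I - {i}))"
  proof (intro nn_integral_cong)
    fix x y assume "x \<in> space (lborel_Pi (I - {i}))"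
    then have "x(i := y) \<in> space (lborel_Pi I)" using ij by (auto simp: space_PiM PiE_def extensional_def)
    then show "indicator ?H (x(i := y)) = (indicator {x j} y :: ennreal)"
      using ij by (auto simp: indicator_def)
  qed
  finally show ?thesis using H by auto
qed

lemma borel_measurable_coordinate: "j \<in> I \<Longrightarrow> (\<lambda>x. x j) \<in> borel_measurable (lborel_Pi I)"
  by measurable

lemma pred_ordered_coordinates:
  "Measurable.pred (lborel_Pi {1..k}) (\<lambda>x. \<forall>j\<in>{1..<k}. x j \<le> (x (Suc j) :: real))"
proof (intro pred_intros_finite)
  fix j assume "j \<in> {1..<k}"
  then show "Measurable.pred (lborel_Pi {1..k}) (\<lambda>x. x j \<le> x (Suc j))"
    unfolding pred_def by (intro borel_measurable_le borel_measurable_coordinate) auto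
qed simp

section \<open>Measurability of suprema and quantiles of continuous distributions\<close>

lemma le_if_le_on_Rats:
  fixes g :: "real \<Rightarrow> real"
  assumes "continuous_on UNIV g" "\<And>r. g (of_rat r) \<le> t"
  shows "g s \<le> t"
proof -
  have "closure \<rat> \<subseteq> {s. g s \<le> t}"
    using assms by (intro closure_minimal closed_Collect_le) (auto simp: Rats_def)
  then show ?thesis using Rats_closure_real by auto
qed

lemma pred_all_le_continuous:
  fixes f :: "'a \<Rightarrow> real \<Rightarrow> real"
  assumes "\<And>x. continuous_on UNIV (f x)" and [measurable]: "\<And>s. (\<lambda>x. f x s) \<in> borel_measurable M"
  shows "Measurable.pred M (\<lambda>x. \<forall>s. f x s \<le> t)"
proof -
  have "(\<forall>s. f x s \<le> t) \<longleftrightarrow> (\<forall>r::rat. f x (of_rat r) \<le> t)" for x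
    using le_if_le_on_Rats[OF assms(1)] by blast
  then show ?thesis by simp
qed

text \<open>The supremum over an unbounded set is a junk value of \<open>Sup\<close>, so the bounded and the
  unbounded case are measured separately.\<close>
lemma borel_measurable_SUP_continuous:
  fixes f :: "'a \<Rightarrow> real \<Rightarrow> real"
  assumes "\<And>x. continuous_on UNIV (f x)" and "\<And>s. (\<lambda>x. f x s) \<in> borel_measurable M"
  shows "(\<lambda>x. SUP s. f x s) \<in> borel_measurable M"
proof (rule borel_measurableI_le)
  fix t
  have [measurable]: "Measurable.pred M (\<lambda>x. \<forall>s. f x s \<le> c)" for c
    by (rule pred_all_le_continuous[OF assms])
  have bdd: "bdd_above (range (f x)) \<longleftrightarrow> (\<exists>n::nat. \<forall>s. f x s \<le> real n)" for x
    by (auto simp: bdd_above_def) (meson order_trans real_arch_simple)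
  have "(SUP s. f x s) \<le> t \<longleftrightarrow>
      (\<exists>n::nat. \<forall>s. f x s \<le> real n) \<and> (\<forall>s. f x s \<le> t)
      \<or> \<not> (\<exists>n::nat. \<forall>s. f x s \<le> real n) \<and> Sup (UNIV :: real set) \<le> t" for x
  proof (cases "bdd_above (range (f x))")
    case True
    then have "(SUP s. f x s) \<le> t \<longleftrightarrow> (\<forall>s. f x s \<le> t)" by (simp add: cSUP_le_iff)
    with True show ?thesis unfolding bdd by blast
  next
    case False
    then have "(SUP s. f x s) = Sup (UNIV :: real set)"
      unfolding Sup_real_def bdd_above_def by (metis UNIV_I)
    with False show ?thesis unfolding bdd by auto
  qed
  then have "{x \<in> space M. (SUP s. f x s) \<le> t} = {x \<in> space M.
      (\<exists>n::nat. \<forall>s. f x s \<le> real n) \<and> (\<forall>s. f x s \<le> t)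
      \<or> \<not> (\<exists>n::nat. \<forall>s. f x s \<le> real n) \<and> Sup (UNIV :: real set) \<le> t}"
    by blast
  also have "\<dots> \<in> sets M" by measurable
  finally show "{x \<in> space M. (SUP s. f x s) \<le> t} \<in> sets M" .
qed

lemma (in real_distribution) cdf_Inf_quantile:
  assumes no_atoms: "\<And>t. measure M {t} = 0" and q: "0 < q" "q < 1"
  shows "cdf M (Inf {t. q \<le> cdf M t}) = q"
proof -
  let ?S = "{t. q \<le> cdf M t}"
  have cont: "continuous_on UNIV (cdf M)"
    using isCont_cdf no_atoms by (simp add: continuous_on_eq_continuous_at)
  have "eventually (\<lambda>t. cdf M t < q) at_bot"
    using order_tendstoD(2)[OF cdf_lim_at_bot q(1)] .
  then obtain a where a: "cdf M a < q" by (auto simp: eventually_at_bot_linorder)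
  have "eventually (\<lambda>t. q < cdf M t) at_top"
    using order_tendstoD(1)[OF cdf_lim_at_top_prob q(2)] .
  then obtain b where b: "q < cdf M b" by (auto simp: eventually_at_top_linorder)
  have "a \<le> b" using a b cdf_nondecreasing[of b a] by linarith
  then have "\<exists>t. a \<le> t \<and> t \<le> b \<and> cdf M t = q"
    using a b by (intro IVT' continuous_on_subset[OF cont]) auto
  then obtain t\<^sub>0 where "cdf M t\<^sub>0 = q" by blast
  then have t\<^sub>0: "t\<^sub>0 \<in> ?S" by simp
  have "a \<le> t" if "t \<in> ?S" for t
  proof (rule ccontr)
    assume "\<not> a \<le> t"
    then have "cdf M t \<le> cdf M a" by (intro cdf_nondecreasing) simp
    with a that show False by simp
  qed
  then have bdd: "bdd_below ?S" by (rule bdd_belowI)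
  have "closed ?S" using cont by (intro closed_Collect_le continuous_on_const)
  then have "Inf ?S \<in> ?S" using t\<^sub>0 bdd by (intro closed_contains_Inf) auto
  moreover have "cdf M (Inf ?S) \<le> cdf M t\<^sub>0" using t\<^sub>0 bdd by (intro cdf_nondecreasing cInf_lower)
  ultimately show ?thesis using \<open>cdf M t\<^sub>0 = q\<close> by simp
qed

section \<open>The density of progressively censored order statistics\<close>

lemma gam_Suc: "k < m \<Longrightarrow> gam m R k = real (R k) + 1 + gam m R (Suc k)"
  unfolding gam_def by (subst sum.atLeast_Suc_atMost) auto

lemma gam_pos: "k \<le> m \<Longrightarrow> gam m R k > 0"
  unfolding gam_def by (rule sum_pos) auto

lemma gam_nonneg: "gam m R k \<ge> 0"
  unfolding gam_def by (rule sum_nonneg) auto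

lemma nn_integral_exp_density_atLeast:
  fixes g \<sigma> :: real assumes g: "g > 0" and \<sigma>: "\<sigma> > 0"
  shows "(\<integral>\<^sup>+y. ennreal (g / \<sigma> * exp (- g * (y - \<mu>) / \<sigma>)) * indicator {a..} y \<partial>lborel)
    = ennreal (exp (- g * (a - \<mu>) / \<sigma>))"
proof -
  have lim: "((\<lambda>y. - exp (- g * (y - \<mu>) / \<sigma>)) \<longlongrightarrow> 0) at_top" using g \<sigma> by real_asymp
  have "(\<integral>\<^sup>+y. ennreal (g / \<sigma> * exp (- g * (y - \<mu>) / \<sigma>)) * indicator {a..} y \<partial>lborel)
      = ennreal (0 - (- exp (- g * (a - \<mu>) / \<sigma>)))"
  proof (rule nn_integral_FTC_atLeast[OF _ _ _ lim])
    show "DERIV (\<lambda>y. - exp (- g * (y - \<mu>) / \<sigma>)) x :> g / \<sigma> * exp (- g * (x - \<mu>) / \<sigma>)" for x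
      using \<sigma> by (auto intro!: derivative_eq_intros simp: field_simps)
  qed (use g \<sigma> in auto)
  then show ?thesis by simp
qed

text \<open>\<open>pc_factor j\<close> is \<open>\<gamma>\<^sub>j f(y) (1 - F(y))\<^bsup>R\<^sub>j\<^esup>\<close> for \<open>y > \<mu>\<close>, and
  \<open>pc_marginal k\<close> is the joint density of the first \<open>k\<close> progressively censored order
  statistics; its last factor \<open>pc_tail k\<close> is the exponential density with rate \<open>\<gamma>\<^sub>k / \<sigma>\<close>,
  which carries the mass of the \<open>\<gamma>\<^sub>k\<close> units still on test.\<close>
definition pc_factor :: "nat \<Rightarrow> (nat \<Rightarrow> nat) \<Rightarrow> real \<times> real \<Rightarrow> nat \<Rightarrow> real \<Rightarrow> real" where
  "pc_factor m R \<theta> j y = gam m R j / snd \<theta> * exp (- (real (R j) + 1) * (y - fst \<theta>) / snd \<theta>)"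

definition pc_tail :: "nat \<Rightarrow> (nat \<Rightarrow> nat) \<Rightarrow> real \<times> real \<Rightarrow> nat \<Rightarrow> real \<Rightarrow> real" where
  "pc_tail m R \<theta> k y = gam m R k / snd \<theta> * exp (- gam m R k * (y - fst \<theta>) / snd \<theta>)"

definition pc_marginal :: "nat \<Rightarrow> (nat \<Rightarrow> nat) \<Rightarrow> real \<times> real \<Rightarrow> nat \<Rightarrow> (nat \<Rightarrow> real) \<Rightarrow> real" where
  "pc_marginal m R \<theta> k x =
    (if (\<forall>j\<in>{1..<k}. x j \<le> x (Suc j)) \<and> fst \<theta> < x 1
     then (\<Prod>j\<in>{1..<k}. pc_factor m R \<theta> j (x j)) * pc_tail m R \<theta> k (x k) else 0)"

lemma pc_tail_nonneg: "snd \<theta> > 0 \<Longrightarrow> pc_tail m R \<theta> k y \<ge> 0"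
  unfolding pc_tail_def by (simp add: gam_nonneg)

lemma pc_marginal_nonneg: "snd \<theta> > 0 \<Longrightarrow> pc_marginal m R \<theta> k x \<ge> 0"
  unfolding pc_marginal_def pc_factor_def pc_tail_def
  by (auto intro!: prod_nonneg mult_nonneg_nonneg divide_nonneg_pos simp: gam_nonneg)

lemma borel_measurable_pc_marginal:
  assumes "1 \<le> k"
  shows "pc_marginal m R \<theta> k \<in> borel_measurable (lborel_Pi {1..k})"
proof -
  note pred_ordered_coordinates[measurable]
  have [measurable]: "(\<lambda>x. x 1) \<in> borel_measurable (lborel_Pi {1..k})"
    "(\<lambda>x. x k) \<in> borel_measurable (lborel_Pi {1..k})" using assms by auto
  have "pc_factor m R \<theta> j \<in> borel_measurable borel" for j
    unfolding pc_factor_def[abs_def] by measurable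
  then have [measurable]: "(\<lambda>x. \<Prod>j\<in>{1..<k}. pc_factor m R \<theta> j (x j)) \<in> borel_measurable (lborel_Pi {1..k})"
    by (intro borel_measurable_prod measurable_compose[OF borel_measurable_coordinate]) auto
  show ?thesis unfolding pc_marginal_def[abs_def] pc_tail_def by measurable
qed

lemma ordered_ge_first:
  "\<forall>j\<in>{1..<m}. x j \<le> x (Suc j) \<Longrightarrow> j \<in> {1..m} \<Longrightarrow> (x 1 :: real) \<le> x j"
proof (induction j)
  case (Suc j)
  then show ?case by (cases "j = 0") (auto intro: order_trans)
qed simp

lemma pc_density_eq_pc_marginal:
  assumes \<sigma>: "snd \<theta> > 0" and m: "1 \<le> m"
  shows "pc_density m R \<theta> x = pc_marginal m R \<theta> m x"
proof (cases "(\<forall>j\<in>{1..<m}. x j \<le> x (Suc j)) \<and> fst \<theta> < x 1")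
  case False
  moreover have "(\<Prod>j=1..m. gam m R j * expf \<theta> (x j) * (1 - expF \<theta> (x j)) ^ R j) = 0"
    if "\<not> fst \<theta> < x 1"
    using that m by (intro prod_zero) (auto intro!: bexI[of _ 1] simp: expf_def)
  ultimately show ?thesis by (auto simp: pc_density_def pc_marginal_def)
next
  case True
  then have gt: "fst \<theta> < x j" if "j \<in> {1..m}" for j
    using ordered_ge_first[of m x j] that by fastforce
  have "gam m R j * expf \<theta> (x j) * (1 - expF \<theta> (x j)) ^ R j = pc_factor m R \<theta> j (x j)"
    if "j \<in> {1..m}" for j
  proof -
    have "(1 - expF \<theta> (x j)) ^ R j = exp (real (R j) * (- (x j - fst \<theta>) / snd \<theta>))"
      using gt[OF that] by (simp add: expF_def exp_of_nat_mult[symmetric] times_divide_eq_right)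
    then show ?thesis using gt[OF that] \<sigma> unfolding pc_factor_def expf_def
      by (simp add: mult.assoc flip: exp_add) (simp add: field_simps)
  qed
  then have "(\<Prod>j=1..m. gam m R j * expf \<theta> (x j) * (1 - expF \<theta> (x j)) ^ R j)
      = (\<Prod>j=1..m. pc_factor m R \<theta> j (x j))"
    by (rule prod.cong[OF refl])
  also have "\<dots> = (\<Prod>j\<in>{1..<m}. pc_factor m R \<theta> j (x j)) * pc_tail m R \<theta> m (x m)"
  proof -
    have "{1..m} = insert m {1..<m}" using m by auto
    moreover have "pc_factor m R \<theta> m (x m) = pc_tail m R \<theta> m (x m)"
      unfolding pc_factor_def pc_tail_def gam_def by (simp add: add.commute)
    ultimately show ?thesis by (simp add: mult.commute)
  qed
  finally show ?thesis using True by (simp add: pc_density_def pc_marginal_def)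
qed

text \<open>Since \<open>\<gamma>\<^sub>k = R\<^sub>k + 1 + \<gamma>\<^sub>k\<^sub>+\<^sub>1\<close>, appending the coordinate \<open>y \<ge> x\<^sub>k\<close> splits the
  tail factor of \<open>x\<^sub>k\<close> into \<open>pc_factor k\<close> and a factor that exactly cancels the tail mass
  beyond \<open>x\<^sub>k\<close>.\<close>
lemma pc_marginal_Suc:
  assumes "1 \<le> k" "k < m" "snd \<theta> > 0"
  shows "pc_marginal m R \<theta> (Suc k) (x(Suc k := y)) = pc_marginal m R \<theta> k x
    * exp (gam m R (Suc k) * (x k - fst \<theta>) / snd \<theta>) * (pc_tail m R \<theta> (Suc k) y * indicator {x k..} y)"
proof -
  let ?x = "x(Suc k := y)"
  have ord: "(\<forall>j\<in>{1..<Suc k}. ?x j \<le> ?x (Suc j)) \<longleftrightarrow> (\<forall>j\<in>{1..<k}. x j \<le> x (Suc j)) \<and> x k \<le> y"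
    using assms(1) by (auto simp: less_Suc_eq)
  have "(\<Prod>j\<in>{1..<Suc k}. pc_factor m R \<theta> j (?x j))
      = (\<Prod>j\<in>{1..<k}. pc_factor m R \<theta> j (x j)) * pc_factor m R \<theta> k (x k)"
  proof -
    have "{1..<Suc k} = insert k {1..<k}" using assms(1) by auto
    moreover have "(\<Prod>j\<in>{1..<k}. pc_factor m R \<theta> j (?x j)) = (\<Prod>j\<in>{1..<k}. pc_factor m R \<theta> j (x j))"
      by (rule prod.cong) auto
    ultimately show ?thesis by (simp add: mult.commute)
  qed
  moreover have "pc_factor m R \<theta> k (x k)
      = pc_tail m R \<theta> k (x k) * exp (gam m R (Suc k) * (x k - fst \<theta>) / snd \<theta>)"
    unfolding pc_factor_def pc_tail_def gam_Suc[OF assms(2), of R]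
    using assms(3) by (simp add: mult.assoc flip: exp_add) (simp add: field_simps)
  moreover have "?x 1 = x 1" using assms(1) by simp
  ultimately show ?thesis unfolding pc_marginal_def ord by (auto simp: indicator_def)
qed

lemma nn_integral_pc_marginal_last:
  assumes "1 \<le> k" "k < m" and \<sigma>: "snd \<theta> > 0"
  shows "(\<integral>\<^sup>+y. ennreal (pc_marginal m R \<theta> (Suc k) (x(Suc k := y))) \<partial>lborel) = ennreal (pc_marginal m R \<theta> k x)"
proof -
  let ?c = "pc_marginal m R \<theta> k x * exp (gam m R (Suc k) * (x k - fst \<theta>) / snd \<theta>)"
  have c: "?c \<ge> 0" using pc_marginal_nonneg[OF \<sigma>] by simp
  have "(\<integral>\<^sup>+y. ennreal (pc_marginal m R \<theta> (Suc k) (x(Suc k := y))) \<partial>lborel)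
      = (\<integral>\<^sup>+y. ennreal ?c * (ennreal (pc_tail m R \<theta> (Suc k) y) * indicator {x k..} y) \<partial>lborel)"
    using c pc_tail_nonneg[OF \<sigma>, of m R "Suc k"] assms
    by (intro nn_integral_cong) (auto simp: pc_marginal_Suc indicator_def ennreal_mult)
  also have "\<dots> = ennreal ?c * ennreal (exp (- gam m R (Suc k) * (x k - fst \<theta>) / snd \<theta>))"
    unfolding pc_tail_def using gam_pos[of "Suc k" m R] assms
    by (subst nn_integral_cmult) (auto simp only: nn_integral_exp_density_atLeast, measurable)
  also have "\<dots> = ennreal (pc_marginal m R \<theta> k x)"
    using c by (simp flip: ennreal_mult add: mult.assoc flip: exp_add)
  finally show ?thesis .
qed

lemma nn_integral_pc_marginal:
  assumes \<sigma>: "snd \<theta> > 0"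
  shows "1 \<le> k \<Longrightarrow> k \<le> m \<Longrightarrow> (\<integral>\<^sup>+x. ennreal (pc_marginal m R \<theta> k x) \<partial>lborel_Pi {1..k}) = 1"
proof (induction k rule: nat_induct_at_least)
  case base
  interpret product_sigma_finite "\<lambda>_. lborel :: real measure" by (rule product_sigma_finite_lborel)
  let ?g = "gam m R 1"
  have pc1: "pc_marginal m R \<theta> 1 x = (if fst \<theta> < x 1 then pc_tail m R \<theta> 1 (x 1) else 0)" for x
    by (simp add: pc_marginal_def)
  have "(\<lambda>y. ennreal (if fst \<theta> < y then pc_tail m R \<theta> 1 y else 0)) \<in> borel_measurable lborel"
    unfolding pc_tail_def by measurable
  then have "(\<integral>\<^sup>+x. ennreal (pc_marginal m R \<theta> 1 x) \<partial>lborel_Pi {1..1})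
      = (\<integral>\<^sup>+y. ennreal (if fst \<theta> < y then pc_tail m R \<theta> 1 y else 0) \<partial>lborel)"
    unfolding atLeastAtMost_singleton pc1 by (rule product_nn_integral_singleton)
  also have "\<dots> = (\<integral>\<^sup>+y. ennreal (?g / snd \<theta> * exp (- ?g * (y - fst \<theta>) / snd \<theta>))
      * indicator {fst \<theta>..} y \<partial>lborel)"
    using AE_lborel_singleton[of "fst \<theta>"]
    by (intro nn_integral_cong_AE) (auto elim!: eventually_mono simp: pc_tail_def indicator_def)
  also have "\<dots> = ennreal (exp (- ?g * (fst \<theta> - fst \<theta>) / snd \<theta>))"
    using base by (intro nn_integral_exp_density_atLeast gam_pos \<sigma>)
  finally show ?case by simp
next
  case (Suc k)
  interpret product_sigma_finite "\<lambda>_. lborel :: real measure" by (rule product_sigma_finite_lborel)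
  have ins: "{1..Suc k} = insert (Suc k) {1..k}" by auto
  have "(\<integral>\<^sup>+x. ennreal (pc_marginal m R \<theta> (Suc k) x) \<partial>lborel_Pi {1..Suc k})
      = (\<integral>\<^sup>+x. (\<integral>\<^sup>+y. ennreal (pc_marginal m R \<theta> (Suc k) (x(Suc k := y))) \<partial>lborel) \<partial>lborel_Pi {1..k})"
    unfolding ins using borel_measurable_pc_marginal[of "Suc k" m R \<theta>] ins
    by (intro product_nn_integral_insert) auto
  also have "\<dots> = (\<integral>\<^sup>+x. ennreal (pc_marginal m R \<theta> k x) \<partial>lborel_Pi {1..k})"
    using Suc \<sigma> by (intro nn_integral_cong nn_integral_pc_marginal_last) auto
  also have "\<dots> = 1" using Suc by simp
  finally show ?case .
qed

lemma prob_space_P_pc: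
  assumes "1 \<le> m" "snd \<theta> > 0"
  shows "prob_space (P_pc m R \<theta>)"
proof (rule prob_spaceI)
  have "emeasure (P_pc m R \<theta>) (space (P_pc m R \<theta>))
      = (\<integral>\<^sup>+x. ennreal (pc_density m R \<theta> x) * indicator (space (lborel_Pi {1..m})) x \<partial>lborel_Pi {1..m})"
    unfolding P_pc_def using assms borel_measurable_pc_marginal[of m m R \<theta>]
    by (subst emeasure_density) (auto simp: pc_density_eq_pc_marginal)
  also have "\<dots> = (\<integral>\<^sup>+x. ennreal (pc_marginal m R \<theta> m x) \<partial>lborel_Pi {1..m})"
    using assms by (intro nn_integral_cong) (simp add: pc_density_eq_pc_marginal)
  also have "\<dots> = 1" using nn_integral_pc_marginal[OF assms(2) assms(1)] by simp
  finally show "emeasure (P_pc m R \<theta>) (space (P_pc m R \<theta>)) = 1" .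
qed

section \<open>The Kolmogorov pivot and the confidence sets\<close>

lemma sigma_hat_shift: "sigma_hat m R (\<lambda>i\<in>{1..m}. c + x i) = sigma_hat m R x"
  unfolding sigma_hat_def by (intro arg_cong[where f = "\<lambda>s. 1 / real m * s"] sum.cong) auto

lemma sigma_hat_pos:
  assumes ord: "\<forall>j\<in>{1..<m}. x j \<le> x (Suc j)" and m: "2 \<le> m" and x12: "x 1 < x 2"
  shows "sigma_hat m R x > 0"
proof -
  let ?f = "\<lambda>j. gam m R j * (x j - x (j - 1))"
  have "?f j \<ge> 0" if "j \<in> {2..m}" for j
  proof -
    have "j - 1 \<in> {1..<m}" using that by auto
    then have "x (j - 1) \<le> x (Suc (j - 1))" using ord by blast
    then show ?thesis using that gam_nonneg by (simp add: Suc_diff_1)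
  qed
  then have "?f 2 \<le> (\<Sum>j=2..m. ?f j)" using m by (intro member_le_sum) auto
  moreover have "?f 2 > 0" using gam_pos[OF m] x12 by (simp add: numeral_2_eq_2)
  ultimately show ?thesis using m unfolding sigma_hat_def by simp
qed

lemma borel_measurable_sigma_hat: "sigma_hat m R \<in> borel_measurable (lborel_Pi {1..m})"
proof -
  have "(\<lambda>x. \<Sum>j=2..m. gam m R j * (x j - x (j - 1))) \<in> borel_measurable (lborel_Pi {1..m})"
    by (intro borel_measurable_sum borel_measurable_times borel_measurable_diff
        borel_measurable_const borel_measurable_coordinate) auto
  then show ?thesis unfolding sigma_hat_def[abs_def] by measurable
qed

lemma Kstat_eq_SUP_expF_gap:
  "Kstat m R \<theta> x = (SUP s. \<bar>expF_gap (fst \<theta>) (snd \<theta>) (sigma_hat m R x) (x 1) s\<bar>)"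
  by (simp add: Kstat_def expF_gap_def theta_hat_def mu_hat_def)

lemma
  assumes "1 \<le> m"
  shows borel_measurable_Kstat: "Kstat m R \<theta> \<in> borel_measurable (lborel_Pi {1..m})"
    and pred_expF_theta_hat_band:
      "Measurable.pred (lborel_Pi {1..m}) (\<lambda>x. \<forall>s. \<bar>expF (theta_hat m R x) s - expF \<theta> s\<bar> \<le> d)"
proof -
  have [measurable]: "(\<lambda>x. x 1) \<in> borel_measurable (lborel_Pi {1..m})"
    using assms by (auto intro: borel_measurable_coordinate)
  note borel_measurable_sigma_hat[measurable]
  have "continuous_on UNIV (\<lambda>s. \<bar>expF (theta_hat m R x) s - expF \<theta> s\<bar>)" for x
    using continuous_on_expF by (intro continuous_intros)
  moreover have "(\<lambda>x. \<bar>expF (theta_hat m R x) s - expF \<theta> s\<bar>) \<in> borel_measurable (lborel_Pi {1..m})" for s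
    unfolding expF_def theta_hat_def mu_hat_def by measurable
  ultimately show "Kstat m R \<theta> \<in> borel_measurable (lborel_Pi {1..m})"
    and "Measurable.pred (lborel_Pi {1..m}) (\<lambda>x. \<forall>s. \<bar>expF (theta_hat m R x) s - expF \<theta> s\<bar> \<le> d)"
    unfolding Kstat_def[abs_def] by (rule borel_measurable_SUP_continuous pred_all_le_continuous)+
qed

lemma graphF_subset_iff: "graphF F \<subseteq> B \<longleftrightarrow> (\<forall>t. (t, F t) \<in> B)"
  unfolding graphF_def by auto

lemma mem_C4'_iff:
  "\<theta> \<in> Theta \<Longrightarrow> \<theta> \<in> C4' m R d x \<longleftrightarrow> (\<forall>s. \<bar>expF (theta_hat m R x) s - expF \<theta> s\<bar> \<le> d)"
  unfolding C4'_def graphF_subset_iff B4_def by simp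

lemma graphF_subset_B4'_iff:
  assumes "\<theta> \<in> Theta"
  shows "graphF (expF \<theta>) \<subseteq> B4' m R d x \<longleftrightarrow> \<theta> \<in> C4' m R d x"
proof
  assume "graphF (expF \<theta>) \<subseteq> B4' m R d x"
  moreover have "B4' m R d x \<subseteq> B4 m R d x" unfolding B4'_def C4'_def by blast
  ultimately show "\<theta> \<in> C4' m R d x" using assms unfolding C4'_def by blast
qed (auto simp: B4'_def)

text \<open>At its own location \<open>\<mu>\<close> the cdf \<open>expF \<theta>\<close> vanishes, whereas every member of \<open>C4''\<close>, whose
  location is at most \<open>mu_hat x\<close>, is positive there once \<open>\<mu> > mu_hat x\<close>.\<close>
lemma graphF_subset_B4''_iff:
  assumes "\<theta> \<in> Theta"
  shows "graphF (expF \<theta>) \<subseteq> B4'' m R d x \<longleftrightarrow> \<theta> \<in> C4'' m R d x"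
proof
  assume sub: "graphF (expF \<theta>) \<subseteq> B4'' m R d x"
  then have "\<theta> \<in> C4' m R d x" using assms unfolding B4''_def C4''_def C4'_def by blast
  moreover have "fst \<theta> \<le> mu_hat x"
  proof (rule ccontr)
    assume less: "\<not> fst \<theta> \<le> mu_hat x"
    have "(fst \<theta>, expF \<theta> (fst \<theta>)) \<in> graphF (expF \<theta>)" by (auto simp: graphF_def)
    then have "(fst \<theta>, 0) \<in> B4'' m R d x" using sub by (simp add: expF_def subset_iff)
    then obtain \<theta>' where "\<theta>' \<in> C4'' m R d x" and "expF \<theta>' (fst \<theta>) = 0"
      unfolding B4''_def graphF_def by auto
    moreover have "fst \<theta>' \<le> mu_hat x" "snd \<theta>' > 0"
      using calculation(1) unfolding C4''_def C4'_def Theta_def by auto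
    ultimately show False using less by (auto simp: expF_def divide_neg_pos)
  qed
  ultimately show "\<theta> \<in> C4'' m R d x" unfolding C4''_def by blast
qed (auto simp: B4''_def)

locale exp_pc_model =
  fixes m :: nat and R :: "nat \<Rightarrow> nat" and \<theta> :: "real \<times> real"
  assumes one_less_m: "1 < m" and sigma_pos: "snd \<theta> > 0"
begin

abbreviation "P \<equiv> P_pc m R \<theta>"

text \<open>On regular samples \<open>Kstat\<close> is the supremum of a function bounded by \<open>1\<close>, not a junk value
  of \<open>Sup\<close>.\<close>
definition regular :: "(nat \<Rightarrow> real) \<Rightarrow> bool" where
  "regular x \<longleftrightarrow> (\<forall>j\<in>{1..<m}. x j \<le> x (Suc j)) \<and> fst \<theta> < x 1 \<and> sigma_hat m R x > 0"

lemma borel_measurable_density: "(\<lambda>x. ennreal (pc_density m R \<theta> x)) \<in> borel_measurable (lborel_Pi {1..m})"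
  using borel_measurable_pc_marginal[of m m R \<theta>] one_less_m
  by (simp add: pc_density_eq_pc_marginal[OF sigma_pos])

lemma space_P [simp]: "space P = space (lborel_Pi {1..m})"
  and sets_P [simp]: "sets P = sets (lborel_Pi {1..m})"
  by (simp_all add: P_pc_def)

lemma prob_space_P: "prob_space P"
  using prob_space_P_pc one_less_m sigma_pos by simp

lemma theta_in_Theta: "\<theta> \<in> Theta"
  using sigma_pos by (simp add: Theta_def)

lemma sets_C4'_event: "{x \<in> space P. \<theta> \<in> C4' m R d x} \<in> sets P"
  using pred_expF_theta_hat_band[of m R \<theta> d] one_less_m by (simp add: mem_C4'_iff[OF theta_in_Theta])

lemma AE_regular: "AE x in P. regular x"
proof -
  have "AE x in lborel_Pi {1..m}. x \<notin> {x \<in> space (lborel_Pi {1..m}). x 1 = x 2}"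
    using one_less_m by (intro AE_not_in null_sets_lborel_Pi_coordinates_eq) auto
  with AE_space have "AE x in lborel_Pi {1..m}. 0 < pc_density m R \<theta> x \<longrightarrow> regular x"
  proof (eventually_elim, intro impI)
    fix x assume "x \<in> space (lborel_Pi {1..m})" "x \<notin> {x \<in> space (lborel_Pi {1..m}). x 1 = x 2}"
      and "0 < pc_density m R \<theta> x"
    moreover have "pc_density m R \<theta> x = pc_marginal m R \<theta> m x"
      using one_less_m by (intro pc_density_eq_pc_marginal sigma_pos) auto
    ultimately have ord: "\<forall>j\<in>{1..<m}. x j \<le> x (Suc j)" and "fst \<theta> < x 1" and "x 1 \<noteq> x 2"
      by (auto simp: pc_marginal_def split: if_splits)
    moreover have "x 1 \<le> x 2" using ord one_less_m by (auto simp: numeral_2_eq_2)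
    ultimately show "regular x" using sigma_hat_pos[OF ord] one_less_m by (auto simp: regular_def)
  qed
  then show ?thesis unfolding P_pc_def by (subst AE_density[OF borel_measurable_density]) auto
qed

lemma regular_expF_gap_le_1:
  "regular x \<Longrightarrow> \<bar>expF (theta_hat m R x) s - expF \<theta> s\<bar> \<le> 1"
  using abs_expF_gap_le_1[OF sigma_pos, where \<sigma>' = "sigma_hat m R x" and \<mu> = "fst \<theta>" and u = "x 1"]
  unfolding regular_def by (simp add: expF_gap_def theta_hat_def mu_hat_def)

lemma regular_Kstat_le_iff:
  "regular x \<Longrightarrow> Kstat m R \<theta> x \<le> t \<longleftrightarrow> (\<forall>s. \<bar>expF (theta_hat m R x) s - expF \<theta> s\<bar> \<le> t)"
  unfolding Kstat_def using regular_expF_gap_le_1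
  by (subst cSUP_le_iff) (auto intro: bdd_aboveI[of _ 1])

text \<open>A diagonal shift \<open>x + c\<one>\<close> of the sample moves \<open>mu_hat\<close> by \<open>c\<close> and leaves
  \<open>sigma_hat\<close> fixed, so along each diagonal line \<open>Kstat\<close> takes the value \<open>t\<close> only at finitely
  many points.\<close>
lemma Kstat_level_set_null:
  "{x \<in> space (lborel_Pi {1..m}). regular x \<and> Kstat m R \<theta> x = t} \<in> null_sets (lborel_Pi {1..m})"
proof (rule null_sets_lborel_Pi_by_diagonal_lines)
  have [measurable]: "Kstat m R \<theta> \<in> borel_measurable (lborel_Pi {1..m})"
    using one_less_m by (intro borel_measurable_Kstat) auto
  have [measurable]: "(\<lambda>x. x 1) \<in> borel_measurable (lborel_Pi {1..m})"
    using one_less_m by (intro borel_measurable_coordinate) auto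
  note pred_ordered_coordinates[measurable] borel_measurable_sigma_hat[measurable]
  show "{x \<in> space (lborel_Pi {1..m}). regular x \<and> Kstat m R \<theta> x = t} \<in> sets (lborel_Pi {1..m})"
    unfolding regular_def by measurable
next
  fix x :: "nat \<Rightarrow> real"
  let ?T = "\<lambda>c. \<lambda>i\<in>{1..m}. c + x i"
  let ?L = "{c. ?T c \<in> {x \<in> space (lborel_Pi {1..m}). regular x \<and> Kstat m R \<theta> x = t}}"
  let ?U = "{u. fst \<theta> < u \<and> (SUP s. \<bar>expF_gap (fst \<theta>) (snd \<theta>) (sigma_hat m R x) u s\<bar>) = t}"
  have T1: "?T c 1 = c + x 1" for c using one_less_m by simp
  have "finite ?L"
  proof (cases "sigma_hat m R x > 0")
    case True
    have "?L \<subseteq> (\<lambda>u. u - x 1) ` ?U"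
    proof
      fix c assume "c \<in> ?L"
      then have "regular (?T c)" "Kstat m R \<theta> (?T c) = t" by auto
      then have "c + x 1 \<in> ?U"
        unfolding regular_def Kstat_eq_SUP_expF_gap sigma_hat_shift T1 by simp
      then show "c \<in> (\<lambda>u. u - x 1) ` ?U" by (intro image_eqI[of _ _ "c + x 1"]) auto
    qed
    moreover have "finite ?U"
      using True sigma_pos by (intro finite_level_set_SUP_abs_expF_gap)
    ultimately show ?thesis by (meson finite_imageI finite_subset)
  next
    case False
    then have "?L = {}" unfolding regular_def by (auto simp only: sigma_hat_shift)
    then show ?thesis by (simp only: finite.emptyI)
  qed
  then show "?L \<in> null_sets lborel" by (rule finite_imp_null_set_lborel)
qed simp

lemma Kstat_no_atoms: "measure P {x \<in> space P. Kstat m R \<theta> x = t} = 0"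
proof -
  let ?N = "{x \<in> space (lborel_Pi {1..m}). regular x \<and> Kstat m R \<theta> x = t}"
  have "AE x in lborel_Pi {1..m}. x \<notin> ?N"
    using Kstat_level_set_null by (rule AE_not_in)
  then have "AE x in P. x \<notin> ?N"
    unfolding P_pc_def by (subst AE_density[OF borel_measurable_density]) (auto elim: AE_mp)
  with AE_regular have "AE x in P. x \<notin> {x \<in> space P. Kstat m R \<theta> x = t}"
    by eventually_elim auto
  moreover have "{x \<in> space P. Kstat m R \<theta> x = t} \<in> sets P"
    using borel_measurable_Kstat[of m R \<theta>] one_less_m by simp
  ultimately have "{x \<in> space P. Kstat m R \<theta> x = t} \<in> null_sets P" by (simp add: AE_iff_null_sets)
  then show ?thesis by (simp add: measure_def null_setsD1)
qed


lemma Kstat_measurable: "Kstat m R \<theta> \<in> borel_measurable P"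
  using borel_measurable_Kstat[of m R \<theta>] one_less_m by (simp add: measurable_cong_sets[OF sets_P refl])

lemma real_distribution_Kstat: "real_distribution (distr P borel (Kstat m R \<theta>))"
  by (rule prob_space.real_distribution_distr[OF prob_space_P Kstat_measurable])

lemma measure_distr_Kstat: "measure (distr P borel (Kstat m R \<theta>)) A = measure P {x \<in> space P. Kstat m R \<theta> x \<in> A}"
  if "A \<in> sets borel"
  using measure_distr[OF Kstat_measurable that] by (simp add: vimage_def Int_def conj_commute)

lemma cdf_distr_Kstat: "cdf (distr P borel (Kstat m R \<theta>)) t = measure P {x \<in> space P. Kstat m R \<theta> x \<le> t}"
  by (simp add: cdf_def measure_distr_Kstat)

lemma cdf_distr_Kstat_d_quant:
  assumes "0 < p" "p < 1"
  shows "cdf (distr P borel (Kstat m R \<theta>)) (d_quant m R \<theta> p) = 1 - p"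
proof -
  have "measure (distr P borel (Kstat m R \<theta>)) {t} = 0" for t
    using Kstat_no_atoms[of t] by (simp add: measure_distr_Kstat)
  then show ?thesis
    unfolding d_quant_def cdf_distr_Kstat[symmetric] using assms
    by (intro real_distribution.cdf_Inf_quantile[OF real_distribution_Kstat]) auto
qed

lemma measure_C4'_eq_cdf:
  "measure P {x \<in> space P. \<theta> \<in> C4' m R d x} = cdf (distr P borel (Kstat m R \<theta>)) d"
proof -
  have "{x \<in> space P. Kstat m R \<theta> x \<le> d} \<in> sets P"
    using borel_measurable_Kstat[of m R \<theta>] one_less_m by simp
  moreover have "AE x in P. x \<in> {x \<in> space P. \<theta> \<in> C4' m R d x} \<longleftrightarrow> x \<in> {x \<in> space P. Kstat m R \<theta> x \<le> d}"
    using AE_regular by eventually_elim (simp add: mem_C4'_iff[OF theta_in_Theta] regular_Kstat_le_iff)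
  ultimately show ?thesis unfolding cdf_distr_Kstat using sets_C4'_event by (intro measure_eq_AE) auto
qed

lemma measure_C4''_eq_measure_C4':
  "measure P {x \<in> space P. \<theta> \<in> C4'' m R d x} = measure P {x \<in> space P. \<theta> \<in> C4' m R d x}"
proof (rule measure_eq_AE)
  have [measurable]: "(\<lambda>x. x 1) \<in> borel_measurable (lborel_Pi {1..m})"
    using one_less_m by (intro borel_measurable_coordinate) auto
  note sets_C4'_event
  moreover have "{x \<in> space P. \<theta> \<in> C4'' m R d x} = {x \<in> space P. \<theta> \<in> C4' m R d x} \<inter> {x \<in> space P. fst \<theta> \<le> x 1}"
    unfolding C4''_def mu_hat_def by auto
  moreover have "{x \<in> space (lborel_Pi {1..m}). fst \<theta> \<le> x 1} \<in> sets (lborel_Pi {1..m})" by measurable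
  ultimately show "{x \<in> space P. \<theta> \<in> C4'' m R d x} \<in> sets P" "{x \<in> space P. \<theta> \<in> C4' m R d x} \<in> sets P"
    by (simp_all only: space_P sets_P sets.Int)
  show "AE x in P. x \<in> {x \<in> space P. \<theta> \<in> C4'' m R d x} \<longleftrightarrow> x \<in> {x \<in> space P. \<theta> \<in> C4' m R d x}"
    using AE_regular by eventually_elim (auto simp: regular_def C4''_def mu_hat_def)
qed

end

theorem mainTheorem7:
  fixes m n :: nat and R :: "nat \<Rightarrow> nat" and p :: real and \<theta> :: "real \<times> real"
  assumes "1 < m" and "m \<le> n" and "(\<Sum>j=1..m. R j) = n - m"
    and "0 < p" and "p < 1" and "\<theta> \<in> Theta"
  defines "d \<equiv> d_quant m R \<theta> p" and "P \<equiv> P_pc m R \<theta>"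
  shows "measure P {x \<in> space P. \<theta> \<in> C4' m R d x} = 1 - p
       \<and> measure P {x \<in> space P. \<theta> \<in> C4'' m R d x} = 1 - p
       \<and> measure P {x \<in> space P. graphF (expF \<theta>) \<subseteq> B4' m R d x} = 1 - p
       \<and> measure P {x \<in> space P. graphF (expF \<theta>) \<subseteq> B4'' m R d x} = 1 - p"
proof -
  interpret exp_pc_model m R \<theta>
    using \<open>1 < m\<close> \<open>\<theta> \<in> Theta\<close> by unfold_locales (simp_all add: Theta_def)
  have C4': "measure P {x \<in> space P. \<theta> \<in> C4' m R d x} = 1 - p"
    unfolding P_def d_def measure_C4'_eq_cdf using \<open>0 < p\<close> \<open>p < 1\<close> by (rule cdf_distr_Kstat_d_quant)
  moreover have "measure P {x \<in> space P. \<theta> \<in> C4'' m R d x} = 1 - p"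
    using C4' unfolding P_def by (simp only: measure_C4''_eq_measure_C4')
  moreover note graphF_subset_B4'_iff[OF \<open>\<theta> \<in> Theta\<close>] graphF_subset_B4''_iff[OF \<open>\<theta> \<in> Theta\<close>]
  ultimately show ?thesis by simp
qed

end
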